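(* Under the Standing Setup and Assumption (G) described in the context, let $g$ be any Boolean function of $k$ variables of the form $$g(x_1,\ldots,x_k)=\bigoplus_{i=1}^s g_i(x_{\ell_i+1},\ldots,x_{\ell_{i+1}}),$$ where each $g_i$ is an arbitrary Boolean function of $\ell_{i+1}-\ell_i$ variables, and regard $g$ as a function on $\mathbf{F}_2^n$ depending only on the first $k$ coordinates. Then $$\mathcal{E}(PC_{f,\mathcal{T}})\ \ge\ \big[\mathcal{E}(f\oplus g)\big]^{2^s}.$$
   Context: Standing Setup. $f:\mathbf{F}_2^n\to\mathbf{F}_2$ is a Boolean function. $\mathbf{x}_1,\ldots,\mathbf{x}_n$ are binary sequences, $\mathbf{x}_j=(x_j(t))_{t\ge0}$, with $\mathbf{x}_j$ periodic of period $T_j$, i.e. $x_j(t)=x_j(t \bmod T_j)$. Let $s\ge1$ and integers $0=\ell_1<\ell_2<\cdots<\ell_{s+1}=k\le n$; variable $j$ belongs to block $i$ if $\ell_i<j\le\ell_{i+1}$. For $1\le i\le s$, $M_i=q_i\,\mathrm{lcm}(T_{\ell_i+1},\ldots,T_{\ell_{i+1}})$ with $q_i$ a positive integer. For $c=\sum_{i=1}^s c_i2^{i-1}\in\{0,\ldots,2^s-1\}$ with $c_i\in\{0,1\}$, put $\tau_c=\sum_{i=1}^s c_iM_i$, and $\mathcal{T}=\{\tau_c\}$. The parity-check sequence is $PC_{f,\mathcal{T}}(t)=\bigoplus_{c=0}^{2^s-1} f\big(x_1(t+\tau_c),\ldots,x_n(t+\tau_c)\big)$. The bias of a Boolean function $h$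 of $m$ variables is $\mathcal{E}(h)=2^{-m}\sum_{x\in\mathbf{F}_2^m}(-1)^{h(x)}$. The bias $\mathcal{E}(PC_{f,\mathcal{T}})$ is the bias of $PC_{f,\mathcal{T}}(t)$ (for a fixed $t\ge0$) viewed as a Boolean function of the $T_1+\cdots+T_n$ bits $x_j(0),\ldots,x_j(T_j-1)$, $1\le j\le n$; equivalently $\mathcal{E}(PC_{f,\mathcal{T}})=\mathbb{E}[(-1)^{PC_{f,\mathcal{T}}(t)}]$ when these bits are independent and uniformly distributed. Assumption (G): (i) for every $j$ with $k<j\le n$, the $2^s$ integers $\tau_c$ are pairwise incongruent modulo $T_j$ (in particular no nonzero element of $\mathcal{T}$ is a multiple of $T_j$); (ii) for every $i\in\{1,\ldots,s\}$ and every $j$ in block $i$, the $2^{s-1}$ integers $\sum_{l\ne i}c_lM_l$ ($c_l\in\{0,1\}$) are pairwise incongruent modulo $T_j$. *)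

theory Defs
  imports Complex_Main
begin

text \<open>Vectors of F_2^m are functions nat => bool supported on {1..m} (coordinate j = x j).\<close>
definition bvecs :: "nat \<Rightarrow> (nat \<Rightarrow> bool) set" where
  "bvecs m = {x. \<forall>j. x j \<longrightarrow> j \<in> {1..m}}"

definition bias :: "nat \<Rightarrow> ((nat \<Rightarrow> bool) \<Rightarrow> bool) \<Rightarrow> real" where
  "bias m h = (\<Sum>x\<in>bvecs m. (if h x then -1 else 1)) / 2 ^ m"

definition cdig :: "nat \<Rightarrow> nat \<Rightarrow> bool" where
  "cdig c i = bit c (i - 1)"

definition Mblk :: "(nat \<Rightarrow> nat) \<Rightarrow> (nat \<Rightarrow> nat) \<Rightarrow> (nat \<Rightarrow> nat) \<Rightarrow> nat \<Rightarrow> nat" where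
  "Mblk q l T i = q i * Lcm (T ` {l i <.. l (Suc i)})"

definition tau :: "nat \<Rightarrow> (nat \<Rightarrow> nat) \<Rightarrow> (nat \<Rightarrow> nat) \<Rightarrow> (nat \<Rightarrow> nat) \<Rightarrow> nat \<Rightarrow> nat" where
  "tau s q l T c = (\<Sum>i=1..s. if cdig c i then Mblk q l T i else 0)"

text \<open>The bits x_j(0..T_j-1), j=1..n, collected in X j t (zero outside the relevant range).\<close>
definition bitassign :: "nat \<Rightarrow> (nat \<Rightarrow> nat) \<Rightarrow> (nat \<Rightarrow> nat \<Rightarrow> bool) set" where
  "bitassign n T = {X. \<forall>j t. X j t \<longrightarrow> (j \<in> {1..n} \<and> t < T j)}"

text \<open>The periodic sequence x_j(t) = x_j(t mod T_j), evaluated on the vector (x_1(t),...,x_n(t)).\<close>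
definition seqvec :: "(nat \<Rightarrow> nat) \<Rightarrow> (nat \<Rightarrow> nat \<Rightarrow> bool) \<Rightarrow> nat \<Rightarrow> (nat \<Rightarrow> bool)" where
  "seqvec T X t = (\<lambda>j. X j (t mod T j))"

definition PC :: "((nat \<Rightarrow> bool) \<Rightarrow> bool) \<Rightarrow> nat \<Rightarrow> (nat \<Rightarrow> nat) \<Rightarrow> (nat \<Rightarrow> nat) \<Rightarrow> (nat \<Rightarrow> nat)
     \<Rightarrow> (nat \<Rightarrow> nat \<Rightarrow> bool) \<Rightarrow> nat \<Rightarrow> bool" where
  "PC f s q l T X t = odd (card {c \<in> {0..<2^s}. f (seqvec T X (t + tau s q l T c))})"

definition biasPC :: "((nat \<Rightarrow> bool) \<Rightarrow> bool) \<Rightarrow> nat \<Rightarrow> nat \<Rightarrow> (nat \<Rightarrow> nat) \<Rightarrow> (nat \<Rightarrow> nat)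
     \<Rightarrow> (nat \<Rightarrow> nat) \<Rightarrow> nat \<Rightarrow> real" where
  "biasPC f n s q l T t =
     (\<Sum>X\<in>bitassign n T. (if PC f s q l T X t then -1 else 1)) / 2 ^ (\<Sum>j=1..n. T j)"

definition blockpart :: "(nat \<Rightarrow> nat) \<Rightarrow> nat \<Rightarrow> (nat \<Rightarrow> bool) \<Rightarrow> (nat \<Rightarrow> bool)" where
  "blockpart l i x = (\<lambda>j. x j \<and> l i < j \<and> j \<le> l (Suc i))"

definition blocksum :: "nat \<Rightarrow> (nat \<Rightarrow> nat) \<Rightarrow> (nat \<Rightarrow> (nat \<Rightarrow> bool) \<Rightarrow> bool) \<Rightarrow> (nat \<Rightarrow> bool) \<Rightarrow> bool" where
  "blocksum s l G x = odd (card {i \<in> {1..s}. G i (blockpart l i x)})"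

end

theory Submission
  imports Defs "HOL-Analysis.Convex"
begin

(*
  Write e(b) = (-1)^b.  The bias of PC_{f,T}(t) is the average, over all
  assignments X of the bits x_j(0..T_j-1), of the sign product
      P_s(X) = prod_{c < 2^s} e(f(x(t + tau_c))).
  (1) Replacing f by f + g does not change P_s(X): for every block i the shifts tau_c with and
      without M_i pair up, and M_i is a period of every sequence of block i, so each factor
      e(g_i(...)) occurs twice.  Hence E(PC_{f+g,T}) = E(PC_{f,T}).
  (2) For s = 0 the bias of PC is the bias of f, because x(t) is uniformly distributed.
  (3) P_{s+1}(X) = P_s(X) * P_s(rot X), where rot shifts every sequence by M_{s+1}.  Assumption (G)
      says that the bits read by P_s and by P_s o rot overlap only in block s+1, which rot leaves
      fixed.  Conditioning on the bits of block s+1 and applying Cauchy-Schwarz gives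
      E(PC_s)^2 <= E(PC_{s+1}).
  Since dropping the last block preserves the hypotheses, induction on s (starting from (2) and
  iterating (3)) gives E(PC_{f+g,T}) >= E(f+g)^(2^s) for s >= 1, and (1) turns this into the theorem.
*)

definition sgnb :: "bool \<Rightarrow> real" where
  "sgnb b = (if b then -1 else 1)"

lemma sgnb_xor: "sgnb (a \<noteq> b) = sgnb a * sgnb b"
  by (simp add: sgnb_def)

lemma sgnb_parity:
  assumes "finite C"
  shows "sgnb (odd (card {c\<in>C. P c})) = (\<Prod>c\<in>C. sgnb (P c))"
  using assms
proof (induction C rule: finite_induct)
  case empty
  then show ?case by (simp add: sgnb_def)
next
  case (insert x F)
  have "{c\<in>insert x F. P c} = (if P x then insert x {c\<in>F. P c} else {c\<in>F. P c})" by auto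
  then have "sgnb (odd (card {c\<in>insert x F. P c})) = sgnb (P x) * sgnb (odd (card {c\<in>F. P c}))"
    using insert.hyps by (simp add: sgnb_def)
  then show ?case using insert by simp
qed

text \<open>A product of signs squares to 1; this is why paired factors cancel.\<close>
lemma prod_sgnb_square: "(\<Prod>c\<in>C. sgnb (P c))\<^sup>2 = 1"
proof -
  have "(\<Prod>c\<in>C. sgnb (P c))\<^sup>2 = (\<Prod>c\<in>C. (sgnb (P c))\<^sup>2)"
    by (rule prod_power_distrib)
  also have "\<dots> = 1" by (intro prod.neutral) (simp add: sgnb_def)
  finally show ?thesis .
qed

section \<open>The shifts tau_c\<close>

lemma less_pow_nobit: "(c::nat) < 2^s \<Longrightarrow> s \<le> m \<Longrightarrow> \<not> bit c m"
  by (metis bit_take_bit_iff not_le take_bit_nat_eq_self_iff)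

lemma set_bit_less:
  assumes "(c::nat) < 2^s" "m < s"
  shows "set_bit m c < 2^s"
proof -
  have "take_bit s c = c" using assms(1) by (simp add: take_bit_nat_eq_self_iff)
  then have "take_bit s (set_bit m c) = set_bit m c" using assms by (simp add: take_bit_set_bit_eq)
  then show ?thesis by (metis take_bit_nat_less_exp)
qed

lemma unset_bit_less:
  assumes "(c::nat) < 2^s"
  shows "unset_bit m c < 2^s"
proof -
  have "s \<le> m \<Longrightarrow> unset_bit m c = c"
    using less_pow_nobit[OF assms] by (intro bit_eqI) (auto simp: bit_unset_bit_iff)
  moreover have "take_bit s c = c" using assms by (simp add: take_bit_nat_eq_self_iff)
  ultimately have "take_bit s (unset_bit m c) = unset_bit m c" by (simp add: take_bit_unset_bit_eq)
  then show ?thesis by (metis take_bit_nat_less_exp)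
qed

lemma period_dvd_Mblk: "l i < j \<Longrightarrow> j \<le> l (Suc i) \<Longrightarrow> T j dvd Mblk q l T i"
  unfolding Mblk_def by (auto intro: dvd_Lcm)

lemma tau_split:
  assumes "1 \<le> i" "i \<le> s"
  shows "tau s q l T c = tau s q l T (unset_bit (i-1) c) + (if cdig c i then Mblk q l T i else 0)"
proof -
  let ?term = "\<lambda>c i'. if cdig c i' then Mblk q l T i' else 0"
  have others: "?term (unset_bit (i-1) c) i' = ?term c i'" if "i' \<in> {1..s} - {i}" for i'
    using that assms by (auto simp: cdig_def bit_unset_bit_iff)
  have "tau s q l T c = (\<Sum>i'\<in>{1..s} - {i}. ?term c i') + ?term c i"
    unfolding tau_def using assms by (simp add: sum.remove add.commute)
  moreover have "tau s q l T (unset_bit (i-1) c) = (\<Sum>i'\<in>{1..s} - {i}. ?term c i')"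
    unfolding tau_def using assms others
    by (simp add: sum.remove cdig_def bit_unset_bit_iff)
  ultimately show ?thesis by simp
qed

lemma tau_set_bit:
  assumes "1 \<le> i" "i \<le> s" "\<not> cdig c i"
  shows "tau s q l T (set_bit (i-1) c) = tau s q l T c + Mblk q l T i"
proof -
  have "unset_bit (i-1) (set_bit (i-1) c) = c"
    using assms by (intro bit_eqI) (auto simp: bit_simps cdig_def)
  then show ?thesis using tau_split[OF assms(1,2), of q l T "set_bit (i-1) c"]
    by (simp add: cdig_def bit_simps)
qed

lemma tau_unset_bit_mod:
  assumes "1 \<le> i" "i \<le> s" "l i < j" "j \<le> l (Suc i)"
  shows "tau s q l T (unset_bit (i-1) c) mod T j = tau s q l T c mod T j"
  using tau_split[OF assms(1,2), of q l T c] period_dvd_Mblk[OF assms(3,4), where q=q and T=T] by auto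

lemma tau_Suc_low: "c < 2^s \<Longrightarrow> tau (Suc s) q l T c = tau s q l T c"
  unfolding tau_def by (simp add: cdig_def less_pow_nobit)

lemma tau_Suc_high:
  assumes "c < 2^s"
  shows "tau (Suc s) q l T (c + 2^s) = tau s q l T c + Mblk q l T (Suc s)"
proof -
  have "set_bit s c = c + 2^s" using assms by (simp add: set_bit_eq less_pow_nobit)
  then show ?thesis
    using tau_set_bit[of "Suc s" "Suc s" c q l T] tau_Suc_low[OF assms, of q l T] assms
    by (simp add: cdig_def less_pow_nobit)
qed

lemma prod_pair_digit:
  fixes h :: "nat \<Rightarrow> real"
  assumes i: "1 \<le> i" "i \<le> s"
    and inv: "\<And>c. c < 2^s \<Longrightarrow> \<not> cdig c i \<Longrightarrow> h (set_bit (i-1) c) = h c"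
  shows "(\<Prod>c\<in>{0..<2^s}. h c) = (\<Prod>c\<in>{c\<in>{0..<2^s}. \<not> cdig c i}. h c)\<^sup>2"
proof -
  define C0 where "C0 = {c\<in>{0..<(2::nat)^s}. \<not> cdig c i}"
  define sb where "sb c = set_bit (i-1) c" for c :: nat
  have unset_sb: "unset_bit (i-1) (sb c) = c" if "c \<in> C0" for c
    using that unfolding sb_def C0_def cdig_def by (intro bit_eqI) (auto simp: bit_simps)
  have split: "{0..<2^s} = C0 \<union> sb ` C0"
  proof (intro set_eqI iffI)
    fix c assume c: "c \<in> {0..<(2::nat)^s}"
    show "c \<in> C0 \<union> sb ` C0"
    proof (cases "cdig c i")
      case True
      have "c = sb (unset_bit (i-1) c)" unfolding sb_def using True
        by (intro bit_eqI) (auto simp: bit_simps cdig_def)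
      moreover have "unset_bit (i-1) c \<in> C0" unfolding C0_def using c unset_bit_less[of c s "i-1"]
        by (auto simp: cdig_def bit_unset_bit_iff)
      ultimately show ?thesis by blast
    qed (use c C0_def in auto)
  next
    fix c assume "c \<in> C0 \<union> sb ` C0"
    then show "c \<in> {0..<2^s}" unfolding C0_def sb_def using set_bit_less[of _ s "i-1"] i by auto
  qed
  have disjoint: "C0 \<inter> sb ` C0 = {}" unfolding C0_def sb_def cdig_def by (auto simp: bit_set_bit_iff)
  have inj: "inj_on sb C0" by (metis inj_onI unset_sb)
  have "(\<Prod>c\<in>{0..<2^s}. h c) = (\<Prod>c\<in>C0. h c) * (\<Prod>c\<in>sb ` C0. h c)"
    unfolding split by (rule prod.union_disjoint) (use disjoint in \<open>auto simp: C0_def\<close>)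
  also have "(\<Prod>c\<in>sb ` C0. h c) = (\<Prod>c\<in>C0. h (sb c))" by (simp add: prod.reindex[OF inj])
  also have "\<dots> = (\<Prod>c\<in>C0. h c)" using inv unfolding sb_def C0_def by (intro prod.cong) auto
  finally show ?thesis unfolding C0_def by (simp add: power2_eq_square)
qed

section \<open>Averages over the cube of bit assignments\<close>

lemma bitassign_eq: "bitassign n T = (\<lambda>P j r. (j, r) \<in> P) ` Pow (SIGMA j:{1..n}. {..<T j})"
proof (intro set_eqI iffI)
  fix X assume "X \<in> bitassign n T"
  then have "X = (\<lambda>j r. (j, r) \<in> {(j, r). X j r})"
    and "{(j, r). X j r} \<in> Pow (SIGMA j:{1..n}. {..<T j})"
    unfolding bitassign_def by auto
  then show "X \<in> (\<lambda>P j r. (j, r) \<in> P) ` Pow (SIGMA j:{1..n}. {..<T j})" by blast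
qed (auto simp: bitassign_def)

lemma finite_bitassign: "finite (bitassign n T)"
  unfolding bitassign_eq by (intro finite_imageI finite_Pow_iff[THEN iffD2] finite_SigmaI) auto

lemma card_bitassign: "card (bitassign n T) = 2 ^ (\<Sum>j=1..n. T j)"
proof -
  have "inj_on (\<lambda>P j r. (j, r) \<in> P) (Pow (SIGMA j:{1..n}. {..<T j}))"
    by (rule inj_onI) (metis (no_types, lifting) pred_equals_eq2)
  then have "card (bitassign n T) = card (Pow (SIGMA j:{1..n}. {..<T j}))"
    unfolding bitassign_eq by (rule card_image)
  also have "\<dots> = 2 ^ card (SIGMA j:{1..n}. {..<T j})"
    by (rule card_Pow, intro finite_SigmaI) auto
  also have "card (SIGMA j:{1..n}. {..<T j}) = (\<Sum>j=1..n. T j)"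
    by (simp add: card_SigmaI)
  finally show ?thesis .
qed

lemma card_bitassign_pos: "card (bitassign n T) > 0"
  by (simp add: card_bitassign)

definition merge :: "(nat \<times> nat) set \<Rightarrow> (nat \<Rightarrow> nat \<Rightarrow> bool) \<Rightarrow> (nat \<Rightarrow> nat \<Rightarrow> bool)
    \<Rightarrow> (nat \<Rightarrow> nat \<Rightarrow> bool)" where
  "merge S X Y = (\<lambda>j r. if (j, r) \<in> S then X j r else Y j r)"

lemma merge_in: "X \<in> bitassign n T \<Longrightarrow> Y \<in> bitassign n T \<Longrightarrow> merge S X Y \<in> bitassign n T"
  unfolding bitassign_def merge_def by auto

lemma merge_merge_left: "merge S (merge S X Z) W = merge S X W"
  unfolding merge_def by auto

text \<open>Averaging over the bits outside S and then over all bits is averaging over all bits: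
  (X, Z) \<mapsto> (merge S X Z, merge S Z X) is an involution of the product of two cubes.\<close>
lemma sum_merge:
  fixes H :: "_ \<Rightarrow> real"
  shows "(\<Sum>X\<in>bitassign n T. \<Sum>Z\<in>bitassign n T. H (merge S X Z))
       = card (bitassign n T) * (\<Sum>X\<in>bitassign n T. H X)"
proof -
  let ?O = "bitassign n T"
  let ?swap = "\<lambda>(X, Z). (merge S X Z, merge S Z X)"
  have swap_swap: "?swap (?swap p) = p" for p
    by (cases p) (auto simp: merge_def)
  have bij: "bij_betw ?swap (?O \<times> ?O) (?O \<times> ?O)"
    by (rule bij_betw_byWitness[where f' = ?swap]) (auto simp: swap_swap merge_in)
  have "(\<Sum>X\<in>?O. \<Sum>Z\<in>?O. H (merge S X Z)) = (\<Sum>p\<in>?O \<times> ?O. (\<lambda>(X, Z). H X) (?swap p))"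
    by (simp add: sum.cartesian_product case_prod_beta)
  also have "\<dots> = (\<Sum>p\<in>?O \<times> ?O. (\<lambda>(X, Z). H X) p)"
    by (rule sum.reindex_bij_betw[OF bij])
  also have "\<dots> = card ?O * (\<Sum>X\<in>?O. H X)"
    by (simp add: sum.cartesian_product[symmetric] sum_distrib_left)
  finally show ?thesis .
qed

text \<open>Let A depend only on the bits in D, let B see the bits in D
  only through those in S, and let A and B have the same conditional expectation given the bits
  in S.  Then E(A)^2 \<le> E(A B): both equal expressions in the conditional expectation h, namely
  E(A) = E(h) and E(A B) = E(h^2).\<close>
lemma conditional_cauchy_schwarz:
  fixes A B :: "(nat \<Rightarrow> nat \<Rightarrow> bool) \<Rightarrow> real" and n :: nat and T :: "nat \<Rightarrow> nat"
  defines "\<Omega> \<equiv> bitassign n T"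
  assumes A_local: "\<And>X Y. X \<in> \<Omega> \<Longrightarrow> Y \<in> \<Omega> \<Longrightarrow> (\<And>j r. (j, r) \<in> D \<Longrightarrow> X j r = Y j r) \<Longrightarrow> A X = A Y"
    and B_local: "\<And>X W. X \<in> \<Omega> \<Longrightarrow> W \<in> \<Omega> \<Longrightarrow> B (merge D X W) = B (merge S X W)"
    and same_cond: "\<And>X. X \<in> \<Omega> \<Longrightarrow> (\<Sum>Z\<in>\<Omega>. A (merge S X Z)) = (\<Sum>Z\<in>\<Omega>. B (merge S X Z))"
  shows "((\<Sum>X\<in>\<Omega>. A X) / card \<Omega>)\<^sup>2 \<le> (\<Sum>X\<in>\<Omega>. A X * B X) / card \<Omega>"
proof -
  define N where "N = real (card \<Omega>)"
  have N_pos: "N > 0" unfolding N_def \<Omega>_def using card_bitassign_pos by simp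
  define h where "h X = (\<Sum>Z\<in>\<Omega>. A (merge S X Z))" for X
  have h_merge: "h (merge S X Z) = h X" for X Z
    unfolding h_def by (simp add: merge_merge_left)
  have sum_h: "(\<Sum>X\<in>\<Omega>. h X) = N * (\<Sum>X\<in>\<Omega>. A X)"
    unfolding h_def N_def \<Omega>_def by (rule sum_merge)
  have sum_h_sq: "(\<Sum>X\<in>\<Omega>. h X * h X) = N * (\<Sum>X\<in>\<Omega>. A X * h X)"
  proof -
    have "(\<Sum>X\<in>\<Omega>. h X * h X) = (\<Sum>X\<in>\<Omega>. \<Sum>Z\<in>\<Omega>. (\<lambda>Y. A Y * h Y) (merge S X Z))"
      by (simp add: h_def sum_distrib_right h_merge[unfolded h_def])
    also have "\<dots> = N * (\<Sum>X\<in>\<Omega>. A X * h X)"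
      unfolding N_def \<Omega>_def by (rule sum_merge)
    finally show ?thesis .
  qed
  have sum_Ah: "(\<Sum>X\<in>\<Omega>. A X * h X) = N * (\<Sum>X\<in>\<Omega>. A X * B X)"
  proof -
    have "A X * B (merge S X W) = (\<lambda>Y. A Y * B Y) (merge D X W)" if "X \<in> \<Omega>" "W \<in> \<Omega>" for X W
    proof -
      have "A (merge D X W) = A X"
        by (rule A_local) (use that merge_in[of X n T W D] in \<open>auto simp: merge_def \<Omega>_def\<close>)
      then show ?thesis using B_local[OF that] by simp
    qed
    then have "(\<Sum>X\<in>\<Omega>. A X * h X) = (\<Sum>X\<in>\<Omega>. \<Sum>W\<in>\<Omega>. (\<lambda>Y. A Y * B Y) (merge D X W))"
      by (simp add: same_cond h_def sum_distrib_left)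
    also have "\<dots> = N * (\<Sum>X\<in>\<Omega>. A X * B X)"
      unfolding N_def \<Omega>_def by (rule sum_merge)
    finally show ?thesis .
  qed
  have "(\<Sum>X\<in>\<Omega>. h X)\<^sup>2 \<le> (\<Sum>X\<in>\<Omega>. (h X)\<^sup>2) * N"
    unfolding N_def by (rule sum_squared_le_sum_of_squares)
  then have "N\<^sup>2 * (\<Sum>X\<in>\<Omega>. A X)\<^sup>2 \<le> N\<^sup>2 * (N * (\<Sum>X\<in>\<Omega>. A X * B X))"
    using sum_h sum_h_sq sum_Ah by (simp add: power2_eq_square algebra_simps)
  then have "(\<Sum>X\<in>\<Omega>. A X)\<^sup>2 \<le> N * (\<Sum>X\<in>\<Omega>. A X * B X)"
    using N_pos by (simp add: mult_le_cancel_left)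
  then have "(\<Sum>X\<in>\<Omega>. A X)\<^sup>2 / N\<^sup>2 \<le> N * (\<Sum>X\<in>\<Omega>. A X * B X) / N\<^sup>2"
    by (intro divide_right_mono) auto
  then show ?thesis using N_pos unfolding N_def by (simp add: power_divide power2_eq_square)
qed

lemma mod_add_left_cancel_nat: "((a::nat) + x) mod m = (a + y) mod m \<longleftrightarrow> x mod m = y mod m"
  by (simp add: nat_mod_eq_iff)

definition rot :: "(nat \<Rightarrow> nat) \<Rightarrow> nat \<Rightarrow> (nat \<Rightarrow> nat \<Rightarrow> bool) \<Rightarrow> (nat \<Rightarrow> nat \<Rightarrow> bool)" where
  "rot T M X = (\<lambda>j r. r < T j \<and> X j ((r + M) mod T j))"

lemma rot_in: "X \<in> bitassign n T \<Longrightarrow> rot T M X \<in> bitassign n T"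
  unfolding bitassign_def rot_def by auto

lemma rot_inj: "inj_on (rot T M) (bitassign n T)"
proof (rule inj_onI, intro ext)
  fix X Y j r
  assume X: "X \<in> bitassign n T" and Y: "Y \<in> bitassign n T" and eq: "rot T M X = rot T M Y"
  show "X j r = Y j r"
  proof (cases "r < T j")
    case False
    then show ?thesis using X Y unfolding bitassign_def by auto
  next
    case True
    let ?shift = "\<lambda>r. (r + M) mod T j"
    have "inj_on ?shift {..<T j}" by (rule inj_onI) (simp add: add.commute[of _ M] mod_add_left_cancel_nat)
    moreover have "?shift ` {..<T j} \<subseteq> {..<T j}" using True by auto
    ultimately have "?shift ` {..<T j} = {..<T j}" by (intro endo_inj_surj) auto
    then have "r \<in> ?shift ` {..<T j}" using True by simp
    then obtain r0 where r0: "r0 < T j" "?shift r0 = r" by auto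
    have "rot T M X j r0 = rot T M Y j r0" using eq by simp
    then show ?thesis using r0 by (simp add: rot_def)
  qed
qed

lemma rot_bij: "bij_betw (rot T M) (bitassign n T) (bitassign n T)"
  by (rule bij_betw_imageI[OF rot_inj])
    (use rot_in endo_inj_surj[OF finite_bitassign _ rot_inj] in blast)

lemma seqvec_rot:
  assumes "X \<in> bitassign n T" and T_pos: "\<And>j. 1 \<le> j \<Longrightarrow> j \<le> n \<Longrightarrow> T j > 0"
  shows "seqvec T (rot T M X) u = seqvec T X (u + M)"
proof
  fix j
  show "seqvec T (rot T M X) u j = seqvec T X (u + M) j"
  proof (cases "1 \<le> j \<and> j \<le> n")
    case True
    then show ?thesis using T_pos by (simp add: seqvec_def rot_def mod_add_left_eq)
  next
    case False
    then show ?thesis using assms(1) by (auto simp: seqvec_def rot_def bitassign_def)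
  qed
qed

lemma rot_merge:
  assumes "X \<in> bitassign n T" and "\<And>j. j \<in> J \<Longrightarrow> T j dvd M"
  shows "rot T M (merge (J \<times> UNIV) X Z) = merge (J \<times> UNIV) X (rot T M Z)"
proof (intro ext)
  fix j r
  show "rot T M (merge (J \<times> UNIV) X Z) j r = merge (J \<times> UNIV) X (rot T M Z) j r"
  proof (cases "j \<in> J \<and> r < T j")
    case True
    then obtain k where "M = T j * k" using assms(2) by (meson dvdE)
    then have "(r + M) mod T j = r" using True by simp
    then show ?thesis using True unfolding rot_def merge_def by auto
  qed (use assms(1) in \<open>auto simp: rot_def merge_def bitassign_def\<close>)
qed

section \<open>The bias of the parity check as an average of sign products\<close>

definition sign_product :: "((nat \<Rightarrow> bool) \<Rightarrow> bool) \<Rightarrow> nat \<Rightarrow> (nat \<Rightarrow> nat) \<Rightarrow> (nat \<Rightarrow> nat)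
    \<Rightarrow> (nat \<Rightarrow> nat) \<Rightarrow> nat \<Rightarrow> (nat \<Rightarrow> nat \<Rightarrow> bool) \<Rightarrow> real" where
  "sign_product f s q l T t X = (\<Prod>c\<in>{0..<2^s}. sgnb (f (seqvec T X (t + tau s q l T c))))"

lemma biasPC_eq:
  "biasPC f n s q l T t = (\<Sum>X\<in>bitassign n T. sign_product f s q l T t X) / card (bitassign n T)"
proof -
  have "sgnb (PC f s q l T X t) = sign_product f s q l T t X" for X
    unfolding PC_def sign_product_def by (rule sgnb_parity) simp
  then have "(if PC f s q l T X t then -1 else 1) = sign_product f s q l T t X" for X
    by (simp add: sgnb_def)
  then show ?thesis unfolding biasPC_def card_bitassign by simp
qed

lemma bitassign_decomp:
  fixes n t :: nat and T :: "nat \<Rightarrow> nat"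
  assumes T_pos: "\<And>j. 1 \<le> j \<Longrightarrow> j \<le> n \<Longrightarrow> T j > 0"
  defines "rest \<equiv> {Y \<in> bitassign n T. \<forall>j. \<not> Y j (t mod T j)}"
  shows "bij_betw (\<lambda>(x, Y) j r. if r = t mod T j then x j else Y j r) (bvecs n \<times> rest) (bitassign n T)"
proof (rule bij_betw_byWitness[where f' = "\<lambda>X. (seqvec T X t, \<lambda>j r. r \<noteq> t mod T j \<and> X j r)"])
  show "\<forall>p\<in>bvecs n \<times> rest. (\<lambda>X. (seqvec T X t, \<lambda>j r. r \<noteq> t mod T j \<and> X j r))
          ((\<lambda>(x, Y) j r. if r = t mod T j then x j else Y j r) p) = p"
    unfolding rest_def seqvec_def by (auto intro!: ext)
  show "\<forall>X\<in>bitassign n T. (\<lambda>(x, Y) j r. if r = t mod T j then x j else Y j r)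
          ((\<lambda>X. (seqvec T X t, \<lambda>j r. r \<noteq> t mod T j \<and> X j r)) X) = X"
    unfolding seqvec_def by (auto intro!: ext)
  show "(\<lambda>(x, Y) j r. if r = t mod T j then x j else Y j r) ` (bvecs n \<times> rest) \<subseteq> bitassign n T"
    using T_pos unfolding rest_def bitassign_def bvecs_def by auto
  show "(\<lambda>X. (seqvec T X t, \<lambda>j r. r \<noteq> t mod T j \<and> X j r)) ` bitassign n T \<subseteq> bvecs n \<times> rest"
    unfolding rest_def bitassign_def bvecs_def seqvec_def by auto
qed

lemma average_seqvec:
  fixes h :: "(nat \<Rightarrow> bool) \<Rightarrow> real"
  assumes T_pos: "\<And>j. 1 \<le> j \<Longrightarrow> j \<le> n \<Longrightarrow> T j > 0"
  shows "(\<Sum>X\<in>bitassign n T. h (seqvec T X t)) / card (bitassign n T)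
       = (\<Sum>x\<in>bvecs n. h x) / 2 ^ n"
proof -
  define rest where "rest = {Y \<in> bitassign n T. \<forall>j. \<not> Y j (t mod T j)}"
  have bij: "bij_betw (\<lambda>(x, Y) j r. if r = t mod T j then x j else Y j r) (bvecs n \<times> rest) (bitassign n T)"
    unfolding rest_def by (rule bitassign_decomp[OF T_pos])
  have rest_pos: "card rest > 0"
  proof -
    have "(\<lambda>j r. False) \<in> rest" unfolding rest_def bitassign_def by simp
    moreover have "finite rest" unfolding rest_def using finite_bitassign by simp
    ultimately show ?thesis using card_gt_0_iff by blast
  qed
  have card_bvecs: "card (bvecs n) = 2 ^ n"
  proof -
    have "bij_betw (\<lambda>P j. j \<in> P) (Pow {1..n}) (bvecs n)"
      by (rule bij_betw_byWitness[where f' = "\<lambda>x. {j. x j}"]) (auto simp: bvecs_def)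
    then show ?thesis by (simp add: bij_betw_same_card[symmetric] card_Pow)
  qed
  have "card (bitassign n T) = 2 ^ n * card rest"
    using bij_betw_same_card[OF bij] by (simp add: card_cartesian_product card_bvecs)
  moreover have "(\<Sum>X\<in>bitassign n T. h (seqvec T X t)) = card rest * (\<Sum>x\<in>bvecs n. h x)"
  proof -
    have "(\<Sum>X\<in>bitassign n T. h (seqvec T X t)) = (\<Sum>(x, Y)\<in>bvecs n \<times> rest. h x)"
      using sum.reindex_bij_betw[OF bij, of "\<lambda>X. h (seqvec T X t)", symmetric]
      by (simp add: seqvec_def case_prod_beta)
    then show ?thesis by (simp add: sum.cartesian_product[symmetric] sum_distrib_left)
  qed
  ultimately show ?thesis using rest_pos by simp
qed

text \<open>For s = 0 the parity check is f(x(t)), whose bias is that of f.\<close>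
lemma biasPC_0:
  assumes "\<And>j. 1 \<le> j \<Longrightarrow> j \<le> n \<Longrightarrow> T j > 0"
  shows "biasPC f n 0 q l T t = bias n f"
  using average_seqvec[OF assms, where h = "\<lambda>x. sgnb (f x)"]
  unfolding biasPC_eq bias_def sign_product_def tau_def by (simp add: sgnb_def)

section \<open>Assumption (G) and the overlap of the windows\<close>

text \<open>The hypotheses of the theorem for s blocks, with k = l_{s+1}: the block structure, positive
  periods, and Assumption (G) (i) and (ii).\<close>
definition assumption_G :: "nat \<Rightarrow> nat \<Rightarrow> (nat \<Rightarrow> nat) \<Rightarrow> (nat \<Rightarrow> nat) \<Rightarrow> (nat \<Rightarrow> nat) \<Rightarrow> bool" where
  "assumption_G n s q l T \<longleftrightarrow>
     l 1 = 0 \<and> (\<forall>i. 1 \<le> i \<and> i \<le> s \<longrightarrow> l i < l (Suc i)) \<and> l (Suc s) \<le> n \<and>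
     (\<forall>j. 1 \<le> j \<and> j \<le> n \<longrightarrow> 0 < T j) \<and>
     (\<forall>j. l (Suc s) < j \<and> j \<le> n \<longrightarrow> inj_on (\<lambda>c. tau s q l T c mod T j) {0..<2^s}) \<and>
     (\<forall>i j. 1 \<le> i \<and> i \<le> s \<and> l i < j \<and> j \<le> l (Suc i) \<longrightarrow>
        inj_on (\<lambda>c. tau s q l T c mod T j) {c\<in>{0..<2^s}. \<not> cdig c i})"

text \<open>Dropping the last block preserves the hypotheses: the variables of block s+1 join the free
  variables, and condition (ii) for block s+1 becomes condition (i) for them.\<close>
lemma assumption_G_Suc:
  assumes "assumption_G n (Suc s) q l T"
  shows "assumption_G n s q l T"
proof -
  have l_mono: "\<forall>i. 1 \<le> i \<and> i \<le> Suc s \<longrightarrow> l i < l (Suc i)"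
    and G1: "\<forall>j. l (Suc (Suc s)) < j \<and> j \<le> n \<longrightarrow>
               inj_on (\<lambda>c. tau (Suc s) q l T c mod T j) {0..<2^Suc s}"
    and G2: "\<forall>i j. 1 \<le> i \<and> i \<le> Suc s \<and> l i < j \<and> j \<le> l (Suc i) \<longrightarrow>
               inj_on (\<lambda>c. tau (Suc s) q l T c mod T j) {c\<in>{0..<2^Suc s}. \<not> cdig c i}"
    using assms unfolding assumption_G_def by blast+
  have restrict: "inj_on (\<lambda>c. tau s q l T c mod T j) C"
    if "inj_on (\<lambda>c. tau (Suc s) q l T c mod T j) C'" "C \<subseteq> C'" "C \<subseteq> {0..<2^s}" for C C' j
    using inj_on_subset[OF that(1,2)] that(3)
    by (subst inj_on_cong[where g = "\<lambda>c. tau (Suc s) q l T c mod T j"]) (auto simp: tau_Suc_low)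
  have free: "inj_on (\<lambda>c. tau s q l T c mod T j) {0..<2^s}"
    if j: "l (Suc s) < j" "j \<le> n" for j
  proof (cases "l (Suc (Suc s)) < j")
    case True
    with G1 j have "inj_on (\<lambda>c. tau (Suc s) q l T c mod T j) {0..<2^Suc s}" by blast
    then show ?thesis by (rule restrict) auto
  next
    case False
    with G2 j have "inj_on (\<lambda>c. tau (Suc s) q l T c mod T j) {c\<in>{0..<2^Suc s}. \<not> cdig c (Suc s)}"
      by simp
    then show ?thesis by (rule restrict) (auto simp: cdig_def less_pow_nobit)
  qed
  have "inj_on (\<lambda>c. tau s q l T c mod T j) {c\<in>{0..<2^s}. \<not> cdig c i}"
    if "1 \<le> i" "i \<le> s" "l i < j" "j \<le> l (Suc i)" for i j
  proof -
    from G2 that have "inj_on (\<lambda>c. tau (Suc s) q l T c mod T j) {c\<in>{0..<2^Suc s}. \<not> cdig c i}"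
      by simp
    then show ?thesis by (rule restrict) auto
  qed
  moreover have "l (Suc s) \<le> n"
  proof -
    have "l (Suc s) < l (Suc (Suc s))" using l_mono by simp
    moreover have "l (Suc (Suc s)) \<le> n" using assms unfolding assumption_G_def by blast
    ultimately show ?thesis by simp
  qed
  ultimately show ?thesis using assms l_mono free unfolding assumption_G_def by simp
qed

lemma block_exists:
  fixes l :: "nat \<Rightarrow> nat"
  assumes "l 1 = 0" "\<And>i. 1 \<le> i \<Longrightarrow> i \<le> m \<Longrightarrow> l i < l (Suc i)" "1 \<le> j" "j \<le> l (Suc m)"
  shows "\<exists>i. 1 \<le> i \<and> i \<le> m \<and> l i < j \<and> j \<le> l (Suc i)"
  using assms
proof (induction m)
  case 0
  then show ?case by simp
next
  case (Suc m)
  show ?case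
  proof (cases "j \<le> l (Suc m)")
    case True
    then obtain i where "1 \<le> i \<and> i \<le> m \<and> l i < j \<and> j \<le> l (Suc i)"
      using Suc by auto
    then show ?thesis by (intro exI[of _ i]) auto
  next
    case False
    then show ?thesis using Suc.prems by (intro exI[of _ "Suc m"]) auto
  qed
qed

definition window :: "nat \<Rightarrow> nat \<Rightarrow> (nat \<Rightarrow> nat) \<Rightarrow> (nat \<Rightarrow> nat) \<Rightarrow> (nat \<Rightarrow> nat) \<Rightarrow> nat
    \<Rightarrow> (nat \<times> nat) set" where
  "window n s q l T t = {(j, (t + tau s q l T c) mod T j) | j c. 1 \<le> j \<and> j \<le> n \<and> c < 2^s}"

lemma sign_product_local:
  assumes "X \<in> bitassign n T" "Y \<in> bitassign n T"
    and agree: "\<And>j r. (j, r) \<in> window n s q l T t \<Longrightarrow> X j r = Y j r"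
  shows "sign_product f s q l T t X = sign_product f s q l T t Y"
proof -
  have "seqvec T X (t + tau s q l T c) = seqvec T Y (t + tau s q l T c)" if "c < 2^s" for c
  proof
    fix j
    show "seqvec T X (t + tau s q l T c) j = seqvec T Y (t + tau s q l T c) j"
      using agree[of j "(t + tau s q l T c) mod T j"] that assms(1,2)
      unfolding seqvec_def window_def bitassign_def by (cases "1 \<le> j \<and> j \<le> n") auto
  qed
  then show ?thesis unfolding sign_product_def by (intro prod.cong) auto
qed

text \<open>The key use of Assumption (G): a bit read by the s-block parity check at time t and, after
  a shift by M_{s+1}, again by it, belongs to a sequence of block s+1.  Otherwise the indices c'
  and c + 2^s would collide modulo T_j, contradicting (i) or (ii) for s+1 blocks.\<close>
lemma shifted_window_collision:
  assumes G: "assumption_G n (Suc s) q l T"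
    and j: "1 \<le> j" "j \<le> n" and c: "c < 2^s" "c' < 2^s"
    and eq: "(t + tau s q l T c') mod T j = (t + tau s q l T c + Mblk q l T (Suc s)) mod T j"
  shows "l (Suc s) < j \<and> j \<le> l (Suc (Suc s))"
proof (rule ccontr)
  assume not_block: "\<not> (l (Suc s) < j \<and> j \<le> l (Suc (Suc s)))"
  let ?b = "c + 2^s"
  have "tau s q l T c' mod T j = (tau s q l T c + Mblk q l T (Suc s)) mod T j"
    using eq unfolding add.assoc mod_add_left_cancel_nat .
  then have collide: "tau (Suc s) q l T c' mod T j = tau (Suc s) q l T ?b mod T j"
    by (simp add: tau_Suc_low[OF c(2)] tau_Suc_high[OF c(1)])
  have range: "c' < 2^Suc s" "?b < 2^Suc s" using c by auto
  have "c + 2^s = set_bit s c" using less_pow_nobit[OF c(1)] by (simp add: set_bit_eq)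
  then have digit: "\<not> bit c' s" "bit ?b s"
    using less_pow_nobit[OF c(2)] by (simp_all add: bit_set_bit_iff)
  show False
  proof (cases "l (Suc (Suc s)) < j")
    case True
    then have inj: "inj_on (\<lambda>c. tau (Suc s) q l T c mod T j) {0..<2^Suc s}"
      using G j unfolding assumption_G_def by blast
    have "c' = ?b" by (rule inj_onD[OF inj collide]) (use range in auto)
    then show False using digit by simp
  next
    case False
    then obtain i where i: "1 \<le> i" "i \<le> Suc s" "l i < j" "j \<le> l (Suc i)"
      using block_exists[of l "Suc s" j] G j unfolding assumption_G_def by auto
    then have i_s: "i \<le> s" using not_block by (cases "i = Suc s") auto
    let ?a' = "unset_bit (i-1) c'" and ?b' = "unset_bit (i-1) ?b"
    have "tau (Suc s) q l T ?a' mod T j = tau (Suc s) q l T ?b' mod T j"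
      using tau_unset_bit_mod[OF i] collide by simp
    moreover have "?a' \<in> {c\<in>{0..<2^Suc s}. \<not> cdig c i}" "?b' \<in> {c\<in>{0..<2^Suc s}. \<not> cdig c i}"
      using unset_bit_less[OF range(1)] unset_bit_less[OF range(2)]
      by (auto simp: cdig_def bit_unset_bit_iff)
    moreover have "inj_on (\<lambda>c. tau (Suc s) q l T c mod T j) {c\<in>{0..<2^Suc s}. \<not> cdig c i}"
      using G i unfolding assumption_G_def by blast
    ultimately have "?a' = ?b'" by (auto dest: inj_onD)
    then have "bit ?a' s = bit ?b' s" by simp
    moreover have "i - 1 \<noteq> s" using i_s i(1) by simp
    ultimately show False using digit by (simp add: bit_unset_bit_iff)
  qed
qed

lemma window_shift:
  assumes G: "assumption_G n (Suc s) q l T" and jr: "(j, r) \<in> window n s q l T t"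
  shows "(j, (r + Mblk q l T (Suc s)) mod T j) \<in> window n s q l T t
     \<longleftrightarrow> j \<in> {l (Suc s)<..l (Suc (Suc s))}"
proof
  obtain c where c: "c < 2^s" "r = (t + tau s q l T c) mod T j" and j: "1 \<le> j" "j \<le> n"
    using jr unfolding window_def by auto
  assume "(j, (r + Mblk q l T (Suc s)) mod T j) \<in> window n s q l T t"
  then obtain c' where c': "c' < 2^s"
    and shifted: "(r + Mblk q l T (Suc s)) mod T j = (t + tau s q l T c') mod T j"
    unfolding window_def by auto
  have "(t + tau s q l T c') mod T j = (r + Mblk q l T (Suc s)) mod T j"
    using shifted by simp
  also have "\<dots> = (t + tau s q l T c + Mblk q l T (Suc s)) mod T j"
    unfolding c(2) by (rule mod_add_left_eq)
  finally show "j \<in> {l (Suc s)<..l (Suc (Suc s))}"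
    using shifted_window_collision[OF G j c(1) c'] by simp
next
  assume "j \<in> {l (Suc s)<..l (Suc (Suc s))}"
  then obtain k where "Mblk q l T (Suc s) = T j * k" using period_dvd_Mblk by (metis dvdE greaterThanAtMost_iff)
  moreover have "r < T j" using jr G unfolding window_def assumption_G_def by auto
  ultimately show "(j, (r + Mblk q l T (Suc s)) mod T j) \<in> window n s q l T t" using jr by simp
qed

section \<open>The squaring step\<close>

text \<open>The s+1 shifts are the s shifts and the same shifts moved by M_{s+1}, so the sign product for
  s+1 blocks is the product for s blocks times its shifted copy.\<close>
lemma sign_product_Suc:
  assumes "X \<in> bitassign n T" and T_pos: "\<And>j. 1 \<le> j \<Longrightarrow> j \<le> n \<Longrightarrow> T j > 0"
  shows "sign_product f (Suc s) q l T t X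
       = sign_product f s q l T t X * sign_product f s q l T t (rot T (Mblk q l T (Suc s)) X)"
proof -
  let ?h = "\<lambda>c. sgnb (f (seqvec T X (t + tau (Suc s) q l T c)))"
  have "sign_product f (Suc s) q l T t X = (\<Prod>c\<in>{0..<2^s}. ?h c) * (\<Prod>c\<in>{2^s..<2^s + 2^s}. ?h c)"
    unfolding sign_product_def mult_2 power_Suc by (rule prod.atLeastLessThan_concat[symmetric]) auto
  also have "(\<Prod>c\<in>{0..<2^s}. ?h c) = sign_product f s q l T t X"
    unfolding sign_product_def by (intro prod.cong) (simp_all add: tau_Suc_low)
  also have "(\<Prod>c\<in>{2^s..<2^s + 2^s}. ?h c) = (\<Prod>c\<in>{0..<2^s}. ?h (c + 2^s))"
    using prod.shift_bounds_nat_ivl[of ?h 0 "2^s" "2^s"] by simp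
  also have "\<dots> = sign_product f s q l T t (rot T (Mblk q l T (Suc s)) X)"
    unfolding sign_product_def
    by (intro prod.cong) (simp_all add: tau_Suc_high seqvec_rot[OF assms] add.assoc)
  finally show ?thesis .
qed

text \<open>E(PC_s)^2 \<le> E(PC_{s+1}), by conditional Cauchy-Schwarz with A = P_s, B = P_s o rot,
  D the window and S the bits of block s+1.\<close>
lemma biasPC_square_le:
  assumes G: "assumption_G n (Suc s) q l T"
  shows "(biasPC f n s q l T t)\<^sup>2 \<le> biasPC f n (Suc s) q l T t"
proof -
  define \<Omega> where "\<Omega> = bitassign n T"
  define M where "M = Mblk q l T (Suc s)"
  define J where "J = {l (Suc s)<..l (Suc (Suc s))}"
  define A where "A = sign_product f s q l T t"
  define B where "B X = A (rot T M X)" for X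
  have T_pos: "\<And>j. 1 \<le> j \<Longrightarrow> j \<le> n \<Longrightarrow> T j > 0" using G unfolding assumption_G_def by auto
  have period: "T j dvd M" if "j \<in> J" for j
    using that period_dvd_Mblk unfolding M_def J_def by auto
  have cs: "((\<Sum>X\<in>\<Omega>. A X) / card \<Omega>)\<^sup>2 \<le> (\<Sum>X\<in>\<Omega>. A X * B X) / card \<Omega>"
    unfolding \<Omega>_def
  proof (rule conditional_cauchy_schwarz[where D = "window n s q l T t" and S = "J \<times> UNIV"])
    show "A X = A Y" if "X \<in> bitassign n T" "Y \<in> bitassign n T"
      "\<And>j r. (j, r) \<in> window n s q l T t \<Longrightarrow> X j r = Y j r" for X Y
      unfolding A_def using that by (rule sign_product_local)
    show "B (merge (window n s q l T t) X W) = B (merge (J \<times> UNIV) X W)"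
      if "X \<in> bitassign n T" "W \<in> bitassign n T" for X W
      unfolding B_def A_def
    proof (rule sign_product_local)
      show "rot T M (merge (window n s q l T t) X W) \<in> bitassign n T"
        and "rot T M (merge (J \<times> UNIV) X W) \<in> bitassign n T"
        using that by (simp_all add: rot_in merge_in)
      fix j r assume "(j, r) \<in> window n s q l T t"
      then show "rot T M (merge (window n s q l T t) X W) j r = rot T M (merge (J \<times> UNIV) X W) j r"
        using window_shift[OF G] unfolding rot_def merge_def M_def J_def by auto
    qed
    show "(\<Sum>Z\<in>bitassign n T. A (merge (J \<times> UNIV) X Z)) = (\<Sum>Z\<in>bitassign n T. B (merge (J \<times> UNIV) X Z))"
      if "X \<in> bitassign n T" for X
    proof -
      have "(\<Sum>Z\<in>bitassign n T. B (merge (J \<times> UNIV) X Z))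
          = (\<Sum>Z\<in>bitassign n T. A (merge (J \<times> UNIV) X (rot T M Z)))"
        unfolding B_def using rot_merge[OF that period] by simp
      also have "\<dots> = (\<Sum>Z\<in>bitassign n T. A (merge (J \<times> UNIV) X Z))"
        by (rule sum.reindex_bij_betw[OF rot_bij, of "\<lambda>Z. A (merge (J \<times> UNIV) X Z)"])
      finally show ?thesis by simp
    qed
  qed
  have "(biasPC f n s q l T t)\<^sup>2 = ((\<Sum>X\<in>\<Omega>. A X) / card \<Omega>)\<^sup>2"
    unfolding biasPC_eq A_def \<Omega>_def ..
  also have "\<dots> \<le> (\<Sum>X\<in>\<Omega>. A X * B X) / card \<Omega>"
    by (rule cs)
  also have "\<dots> = biasPC f n (Suc s) q l T t"
    unfolding biasPC_eq \<Omega>_def A_def B_def M_def using sign_product_Suc[OF _ T_pos] by simp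
  finally show ?thesis .
qed

lemma biasPC_lower_bound:
  assumes "assumption_G n (Suc s) q l T"
  shows "((bias n f)\<^sup>2) ^ (2 ^ s) \<le> biasPC f n (Suc s) q l T t"
  using assms
proof (induction s)
  case 0
  have "\<And>j. 1 \<le> j \<Longrightarrow> j \<le> n \<Longrightarrow> T j > 0" using 0 unfolding assumption_G_def by auto
  then have "biasPC f n 0 q l T t = bias n f" by (rule biasPC_0)
  then show ?case using biasPC_square_le[OF "0", of f t] by simp
next
  case (Suc s)
  have "(((bias n f)\<^sup>2) ^ (2 ^ s))\<^sup>2 \<le> (biasPC f n (Suc s) q l T t)\<^sup>2"
    using Suc.IH[OF assumption_G_Suc[OF Suc.prems]] by (intro power_mono) auto
  also have "\<dots> \<le> biasPC f n (Suc (Suc s)) q l T t"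
    by (rule biasPC_square_le[OF Suc.prems])
  finally show ?case by (simp add: power_mult[symmetric] mult.commute)
qed

section \<open>Adding a block-separable function does not change the parity check\<close>

lemma blockpart_shift: "blockpart l i (seqvec T X (u + Mblk q l T i)) = blockpart l i (seqvec T X u)"
proof
  fix j
  show "blockpart l i (seqvec T X (u + Mblk q l T i)) j = blockpart l i (seqvec T X u) j"
  proof (cases "l i < j \<and> j \<le> l (Suc i)")
    case True
    then obtain k where "Mblk q l T i = T j * k" using period_dvd_Mblk by (meson dvdE)
    then show ?thesis unfolding blockpart_def seqvec_def by simp
  qed (auto simp: blockpart_def)
qed

text \<open>Each g_i contributes every one of its values twice, once for c and once for c + 2^(i-1).\<close>
lemma sign_product_block:
  assumes "1 \<le> i" "i \<le> s"
  shows "(\<Prod>c\<in>{0..<2^s}. sgnb (G i (blockpart l i (seqvec T X (t + tau s q l T c))))) = 1"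
proof -
  have "(\<Prod>c\<in>{0..<2^s}. sgnb (G i (blockpart l i (seqvec T X (t + tau s q l T c)))))
      = (\<Prod>c\<in>{c\<in>{0..<2^s}. \<not> cdig c i}. sgnb (G i (blockpart l i (seqvec T X (t + tau s q l T c)))))\<^sup>2"
  proof (rule prod_pair_digit[OF assms])
    fix c :: nat assume "\<not> cdig c i"
    then have "tau s q l T (set_bit (i-1) c) = tau s q l T c + Mblk q l T i"
      by (rule tau_set_bit[OF assms])
    then show "sgnb (G i (blockpart l i (seqvec T X (t + tau s q l T (set_bit (i-1) c)))))
             = sgnb (G i (blockpart l i (seqvec T X (t + tau s q l T c))))"
      by (simp add: add.assoc[symmetric] blockpart_shift)
  qed
  then show ?thesis by (simp only: prod_sgnb_square)
qed

lemma sign_product_blocksum: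
  "sign_product (\<lambda>x. f x \<noteq> blocksum s l G x) s q l T t X = sign_product f s q l T t X"
proof -
  let ?x = "\<lambda>c. seqvec T X (t + tau s q l T c)"
  have sgnb_g: "sgnb (blocksum s l G x) = (\<Prod>i\<in>{1..s}. sgnb (G i (blockpart l i x)))" for x
    unfolding blocksum_def by (rule sgnb_parity) simp
  have "sign_product (\<lambda>x. f x \<noteq> blocksum s l G x) s q l T t X
      = sign_product f s q l T t X * (\<Prod>c\<in>{0..<2^s}. \<Prod>i\<in>{1..s}. sgnb (G i (blockpart l i (?x c))))"
    unfolding sign_product_def sgnb_xor sgnb_g by (rule prod.distrib)
  also have "(\<Prod>c\<in>{0..<2^s}. \<Prod>i\<in>{1..s}. sgnb (G i (blockpart l i (?x c))))
      = (\<Prod>i\<in>{1..s}. \<Prod>c\<in>{0..<2^s}. sgnb (G i (blockpart l i (?x c))))"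
    by (rule prod.swap)
  also have "\<dots> = 1" by (intro prod.neutral ballI sign_product_block) auto
  finally show ?thesis by simp
qed

theorem theorem1:
  fixes f :: "(nat \<Rightarrow> bool) \<Rightarrow> bool"
    and G :: "nat \<Rightarrow> (nat \<Rightarrow> bool) \<Rightarrow> bool"
    and n k s t :: nat
    and l T q :: "nat \<Rightarrow> nat"
  assumes s_pos: "s \<ge> 1"
    and l_first: "l 1 = 0"
    and l_mono: "\<And>i. 1 \<le> i \<Longrightarrow> i \<le> s \<Longrightarrow> l i < l (Suc i)"
    and l_last: "l (Suc s) = k"
    and k_le: "k \<le> n"
    and T_pos: "\<And>j. 1 \<le> j \<Longrightarrow> j \<le> n \<Longrightarrow> T j > 0"
    and q_pos: "\<And>i. 1 \<le> i \<Longrightarrow> i \<le> s \<Longrightarrow> q i > 0"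
    and G1: "\<And>j. k < j \<Longrightarrow> j \<le> n \<Longrightarrow>
               inj_on (\<lambda>c. tau s q l T c mod T j) {0..<2^s}"
    and G2: "\<And>i j. 1 \<le> i \<Longrightarrow> i \<le> s \<Longrightarrow> l i < j \<Longrightarrow> j \<le> l (Suc i) \<Longrightarrow>
               inj_on (\<lambda>c. tau s q l T c mod T j) {c \<in> {0..<2^s}. \<not> cdig c i}"
  shows "biasPC f n s q l T t \<ge> (bias n (\<lambda>x. f x \<noteq> blocksum s l G x)) ^ (2 ^ s)"
proof -
  let ?fg = "\<lambda>x. f x \<noteq> blocksum s l G x"
  obtain s' where s': "s = Suc s'" using s_pos by (cases s) auto
  have "assumption_G n s q l T"
    unfolding assumption_G_def using l_first l_mono l_last k_le T_pos G1 G2 by auto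
  then have "(bias n ?fg) ^ (2 ^ s) \<le> biasPC ?fg n s q l T t"
    using biasPC_lower_bound[where f = ?fg] unfolding s' by (simp add: power_mult)
  moreover have "sign_product ?fg s q l T t = sign_product f s q l T t"
    by (rule ext) (rule sign_product_blocksum)
  ultimately show ?thesis unfolding biasPC_eq by simp
qed

end
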